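(* Let $(\mathbf F,\prec)$ be an IS-family over a finite set $V$. Then for every $S\in\mathbf F$, $hat(S)=S\setminus Vis(S)$.
   Context: Let $V$ be a finite set, $n=|V|$, $\mathbf F$ a family of subsets of $V$ and $\prec$ a strict partial order on $\mathbf F$; $S\preceq S'$ means $S\prec S'$ or $S=S'$. For $S\in\mathbf F$ and $v\in V$, $S$ covers $v$ if there is $S'\in\mathbf F$ with $S'\prec S$ and $v\in S'\setminus S$. $Pred(S)$ is the set of $S'\in\mathbf F$ with $S'\prec S$ such that there is no $S''\in\mathbf F$ with $S'\prec S''\prec S$. The visible set $Vis(S)$ is the set of $v\in V$ such that $v\in S'$ for some $S'\in Pred(S)$ and $v$ is not covered by any element of $Pred(S)$. For $S\in\mathbf F$ and $v\in S$, a witness of $v$ w.r.t. $S$ is a $\prec$-minimal element $S'\in\mathbf F$ with $S\prec S'$ and $v\in S\setminus S'$. $(\mathbf F,\prec)$ is an IS-family if: (SE) there is a unique element $sm(\mathbf F)\in\mathbf F$ with $sm(\mathbf F)\prec S$ for every other $S\in\mathbf F$; (SM) $S_1\prec S_2$ implies $|S_1|<|S_2|$; (SW) for every $S\in\mathbf F$ and $v\in S$ there is at most one witness of $v$ w.r.t. $S$; (TE) if $S_1\prec S_2\prec S_3$ are in $\mathbf F$ and $v\in S_1\setminus S_2$ then $v\in S_1\setminus S_3$; (LVS) for every $S\in\mathbf F$ and $S'\in Pred(S)$, $|S'|\le |Vis(S)|$; (DVS) for every $S\in\mathbf F$ with $S\ne sm(\mathbf F)$, $Vis(S)$ is not a subset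 of $S$; (EC) $sm(\mathbf F)$ can be computed in $O(n^3)$ time, for given $S\in\mathbf F$ and $v\in S$ the witness of $v$ w.r.t. $S$ can be computed (or its nonexistence reported) in $O(n^3)$ time, and $S_1\prec S_2$ can be tested in $O(|S_1|)$ time. Notation: $hat(S)=S\setminus\bigcup_{S'\prec S}S'$. *)

theory Defs
  imports Main
begin

definition strict_po_on :: "'a set set \<Rightarrow> ('a set \<Rightarrow> 'a set \<Rightarrow> bool) \<Rightarrow> bool" where
  "strict_po_on F lt \<longleftrightarrow>
     (\<forall>S\<in>F. \<not> lt S S) \<and>
     (\<forall>S1\<in>F. \<forall>S2\<in>F. \<forall>S3\<in>F. lt S1 S2 \<and> lt S2 S3 \<longrightarrow> lt S1 S3)"

definition covers :: "'a set set \<Rightarrow> ('a set \<Rightarrow> 'a set \<Rightarrow> bool) \<Rightarrow> 'a set \<Rightarrow> 'a \<Rightarrow> bool" where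
  "covers F lt S v \<longleftrightarrow> (\<exists>S'\<in>F. lt S' S \<and> v \<in> S' - S)"

definition Pred :: "'a set set \<Rightarrow> ('a set \<Rightarrow> 'a set \<Rightarrow> bool) \<Rightarrow> 'a set \<Rightarrow> 'a set set" where
  "Pred F lt S = {S' \<in> F. lt S' S \<and> \<not> (\<exists>S''\<in>F. lt S' S'' \<and> lt S'' S)}"

definition Vis :: "'a set set \<Rightarrow> ('a set \<Rightarrow> 'a set \<Rightarrow> bool) \<Rightarrow> 'a set \<Rightarrow> 'a set" where
  "Vis F lt S = {v. (\<exists>S'\<in>Pred F lt S. v \<in> S') \<and> \<not> (\<exists>S'\<in>Pred F lt S. covers F lt S' v)}"

definition is_witness :: "'a set set \<Rightarrow> ('a set \<Rightarrow> 'a set \<Rightarrow> bool) \<Rightarrow> 'a set \<Rightarrow> 'a \<Rightarrow> 'a set \<Rightarrow> bool" where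
  "is_witness F lt S v S' \<longleftrightarrow>
     S' \<in> F \<and> lt S S' \<and> v \<in> S - S' \<and>
     \<not> (\<exists>T\<in>F. lt T S' \<and> lt S T \<and> v \<in> S - T)"

definition sm :: "'a set set \<Rightarrow> ('a set \<Rightarrow> 'a set \<Rightarrow> bool) \<Rightarrow> 'a set" where
  "sm F lt = (THE s. s \<in> F \<and> (\<forall>S\<in>F. S \<noteq> s \<longrightarrow> lt s S))"

definition hat :: "'a set set \<Rightarrow> ('a set \<Rightarrow> 'a set \<Rightarrow> bool) \<Rightarrow> 'a set \<Rightarrow> 'a set" where
  "hat F lt S = S - \<Union>{S' \<in> F. lt S' S}"

text \<open>IS-family, conditions (SE),(SM),(SW),(TE),(LVS),(DVS). The algorithmic
  condition (EC) is a running-time requirement and is not expressible here.\<close>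

definition IS_family :: "'a set \<Rightarrow> 'a set set \<Rightarrow> ('a set \<Rightarrow> 'a set \<Rightarrow> bool) \<Rightarrow> bool" where
  "IS_family V F lt \<longleftrightarrow>
     finite V \<and> F \<subseteq> Pow V \<and> strict_po_on F lt \<and>
     \<comment> \<open>SE\<close>
     (\<exists>!s. s \<in> F \<and> (\<forall>S\<in>F. S \<noteq> s \<longrightarrow> lt s S)) \<and>
     \<comment> \<open>SM\<close>
     (\<forall>S1\<in>F. \<forall>S2\<in>F. lt S1 S2 \<longrightarrow> card S1 < card S2) \<and>
     \<comment> \<open>SW\<close>
     (\<forall>S\<in>F. \<forall>v\<in>S. \<forall>W1 W2. is_witness F lt S v W1 \<and> is_witness F lt S v W2 \<longrightarrow> W1 = W2) \<and>
     \<comment> \<open>TE\<close>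
     (\<forall>S1\<in>F. \<forall>S2\<in>F. \<forall>S3\<in>F. \<forall>v. lt S1 S2 \<and> lt S2 S3 \<and> v \<in> S1 - S2 \<longrightarrow> v \<in> S1 - S3) \<and>
     \<comment> \<open>LVS\<close>
     (\<forall>S\<in>F. \<forall>S'\<in>Pred F lt S. card S' \<le> card (Vis F lt S)) \<and>
     \<comment> \<open>DVS\<close>
     (\<forall>S\<in>F. S \<noteq> sm F lt \<longrightarrow> \<not> Vis F lt S \<subseteq> S)"

end

theory Submission
  imports Defs
begin

text \<open>An element v of S outside hat(S) lies in some S' \<prec> S, and S' lies below an immediate
  predecessor P of S. By (TE), an element that is dropped on the way up to S stays dropped,
  so v cannot leave between S' and P, nor between a set covering it and its successor in
  Pred(S). Hence v lies in P and is covered by no predecessor, i.e. v is visible.\<close>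

lemma Pred_memD: "P \<in> Pred F lt S \<Longrightarrow> P \<in> F \<and> lt P S"
  unfolding Pred_def by simp

lemma exists_Pred_above:
  assumes "finite F" and "strict_po_on F lt" and "S' \<in> F" and "lt S' S"
  shows "\<exists>P\<in>Pred F lt S. S' = P \<or> lt S' P"
  using assms(3,4)
proof (induction "card {T \<in> F. lt S' T \<and> lt T S}" arbitrary: S' rule: less_induct)
  case less
  show ?case
  proof (cases "S' \<in> Pred F lt S")
    case True
    then show ?thesis by blast
  next
    case False
    then obtain U where U: "U \<in> F" "lt S' U" "lt U S"
      using less.prems unfolding Pred_def by blast
    have trans: "\<And>A B C. A \<in> F \<Longrightarrow> B \<in> F \<Longrightarrow> C \<in> F \<Longrightarrow> lt A B \<Longrightarrow> lt B C \<Longrightarrow> lt A C"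
      using assms(2) unfolding strict_po_on_def by blast
    have "{T \<in> F. lt U T \<and> lt T S} \<subset> {T \<in> F. lt S' T \<and> lt T S}"
      using U assms(2) trans[OF less.prems(1) U(1)] unfolding strict_po_on_def by blast
    then have "card {T \<in> F. lt U T \<and> lt T S} < card {T \<in> F. lt S' T \<and> lt T S}"
      using assms(1) by (simp add: psubset_card_mono)
    then obtain P where P: "P \<in> Pred F lt S" "U = P \<or> lt U P"
      using less.hyps U(1,3) by blast
    then have "lt S' P"
      using U(2) trans[OF less.prems(1) U(1)] Pred_memD by blast
    with P(1) show ?thesis by blast
  qed
qed

lemma hat_subset_diff_Vis: "hat F lt S \<subseteq> S - Vis F lt S"
  unfolding hat_def Vis_def Pred_def by auto

lemma diff_Vis_subset_hat:
  assumes "finite F" and "strict_po_on F lt" and "S \<in> F"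
    and TE: "\<And>A B C v. A \<in> F \<Longrightarrow> B \<in> F \<Longrightarrow> C \<in> F \<Longrightarrow> lt A B \<Longrightarrow> lt B C \<Longrightarrow> v \<in> A - B
               \<Longrightarrow> v \<notin> C"
  shows "S - Vis F lt S \<subseteq> hat F lt S"
proof
  fix v assume v: "v \<in> S - Vis F lt S"
  show "v \<in> hat F lt S"
  proof (rule ccontr)
    assume "v \<notin> hat F lt S"
    then obtain S' where S': "S' \<in> F" "lt S' S" "v \<in> S'"
      using v unfolding hat_def by auto
    obtain P where P: "P \<in> Pred F lt S" "S' = P \<or> lt S' P"
      using exists_Pred_above[OF assms(1,2) S'(1,2)] by blast
    have "v \<in> P"
      using P S' v TE[OF S'(1) _ assms(3)] Pred_memD by blast
    then obtain Q U where "Q \<in> Pred F lt S" "U \<in> F" "lt U Q" "v \<in> U - Q"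
      using v P(1) unfolding Vis_def covers_def by blast
    then show False
      using v TE[OF _ _ assms(3)] Pred_memD by blast
  qed
qed

theorem proposition1:
  assumes "IS_family V F lt" and "S \<in> F"
  shows "hat F lt S = S - Vis F lt S"
proof -
  have "finite F"
    using assms(1) unfolding IS_family_def by (meson finite_Pow_iff finite_subset)
  moreover have "strict_po_on F lt"
    using assms(1) unfolding IS_family_def by blast
  moreover have "\<And>A B C v. A \<in> F \<Longrightarrow> B \<in> F \<Longrightarrow> C \<in> F \<Longrightarrow> lt A B \<Longrightarrow> lt B C
                   \<Longrightarrow> v \<in> A - B \<Longrightarrow> v \<notin> C"
    using assms(1) unfolding IS_family_def by blast
  ultimately show ?thesis
    by (intro equalityI hat_subset_diff_Vis diff_Vis_subset_hat[OF _ _ assms(2)])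
qed

end
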